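(* There is an absolute constant $c>0$ such that for every $n\ge 2$ and every graph $H$ on $n$ vertices with at least one edge, $Q(f_{[H]}) \ge c\, n$.
   Context: A homomorphism from a graph $H$ to a graph $G$ is a map $h:V(H)\to V(G)$ (not necessarily injective) such that $\{h(u),h(v)\}\in E(G)$ whenever $\{u,v\}\in E(H)$ (graphs are simple, so in particular $h(u)\ne h(v)$ for adjacent $u,v$). For a fixed graph $H$ on $n$ vertices, $f_{[H]}:\{0,1\}^{\binom n2}\to\{0,1\}$ takes as input a graph $G$ on vertex set $[n]$ given by its edge-indicator bits, and $f_{[H]}(G)=1$ iff $H$ admits a homomorphism into $G$. $Q(f)$ denotes the bounded-error (success probability at least $2/3$) quantum query complexity of a Boolean function $f$. *)

theory Defs
  imports Complex_Main "Jordan_Normal_Form.Matrix"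
begin

text \<open>Inputs are subsets x of a finite index set I (x is the set of
variables equal to 1). An algorithm with T queries acting on C^d consists of
unitaries U 0, ..., U T (independent of the input), a labelling lab of the
computational basis states by the queried variable (None = no query), and an
accepting set acc of basis states.\<close>

definition cadj :: "complex mat \<Rightarrow> complex mat" where
  "cadj A = mat (dim_col A) (dim_row A) (\<lambda>(i,j). cnj (A $$ (j,i)))"

definition unitary_mat :: "nat \<Rightarrow> complex mat \<Rightarrow> bool" where
  "unitary_mat d U \<longleftrightarrow> U \<in> carrier_mat d d \<and> U * cadj U = 1\<^sub>m d \<and> cadj U * U = 1\<^sub>m d"

definition oracle_mat :: "nat \<Rightarrow> (nat \<Rightarrow> 'i option) \<Rightarrow> 'i set \<Rightarrow> complex mat" where
  "oracle_mat d lab x = mat d d (\<lambda>(j,k). if j = k then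
       (case lab j of Some i \<Rightarrow> if i \<in> x then -1 else 1 | None \<Rightarrow> 1) else 0)"

fun qstate :: "nat \<Rightarrow> (nat \<Rightarrow> complex mat) \<Rightarrow> (nat \<Rightarrow> 'i option) \<Rightarrow> 'i set \<Rightarrow> nat \<Rightarrow> complex vec" where
  "qstate d U lab x 0 = U 0 *\<^sub>v unit_vec d 0"
| "qstate d U lab x (Suc t) = U (Suc t) *\<^sub>v (oracle_mat d lab x *\<^sub>v qstate d U lab x t)"

definition accept_prob :: "nat \<Rightarrow> (nat \<Rightarrow> complex mat) \<Rightarrow> (nat \<Rightarrow> 'i option) \<Rightarrow> nat set
    \<Rightarrow> nat \<Rightarrow> 'i set \<Rightarrow> real" where
  "accept_prob d U lab acc T x = (\<Sum>j\<in>acc \<inter> {..<d}. (cmod (qstate d U lab x T $ j))\<^sup>2)"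

definition computes_bounded_error ::
  "'i set \<Rightarrow> ('i set \<Rightarrow> bool) \<Rightarrow> nat \<Rightarrow> nat \<Rightarrow> (nat \<Rightarrow> complex mat) \<Rightarrow> (nat \<Rightarrow> 'i option)
     \<Rightarrow> nat set \<Rightarrow> bool" where
  "computes_bounded_error I f T d U lab acc \<longleftrightarrow>
     d > 0 \<and> (\<forall>t\<le>T. unitary_mat d (U t)) \<and> (\<forall>j<d. \<forall>i. lab j = Some i \<longrightarrow> i \<in> I) \<and>
     (\<forall>x. x \<subseteq> I \<longrightarrow>
        (f x \<longrightarrow> accept_prob d U lab acc T x \<ge> 2/3) \<and>
        (\<not> f x \<longrightarrow> 1 - accept_prob d U lab acc T x \<ge> 2/3))"

definition Q :: "'i set \<Rightarrow> ('i set \<Rightarrow> bool) \<Rightarrow> nat" where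
  "Q I f = (LEAST T. \<exists>d U lab acc. computes_bounded_error I f T d U lab acc)"

text \<open>Possible edges of a simple graph on vertex set {0..<n} (standing for [n]);
a graph is a set of such edges.\<close>
definition all_edges :: "nat \<Rightarrow> nat set set" where
  "all_edges n = {{u, v} | u v. u < n \<and> v < n \<and> u \<noteq> v}"

definition has_hom :: "nat \<Rightarrow> nat set set \<Rightarrow> nat set set \<Rightarrow> bool" where
  "has_hom n EH EG \<longleftrightarrow> (\<exists>h. (\<forall>u<n. h u < n) \<and>
      (\<forall>u v. {u, v} \<in> EH \<longrightarrow> {h u, h v} \<in> EG))"

definition f_hom :: "nat \<Rightarrow> nat set set \<Rightarrow> nat set set \<Rightarrow> bool" where
  "f_hom n EH = (\<lambda>EG. has_hom n EH EG)"

end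

theory Submission
  imports Defs "HOL-Analysis.L2_Norm" "HOL-Library.Nat_Bijection"
begin

text \<open>
  If \<open>f\<close> is sensitive at an input \<open>x\<close> to every variable of a set \<open>S\<close>, then any bounded-error
  algorithm with \<open>T\<close> queries has \<open>|S| \<le> 100 T\<^sup>2\<close> (the hybrid argument of Bennett, Bernstein,
  Brassard and Vazirani): flipping a variable \<open>e \<in> S\<close> moves the final state by at least \<open>1/5\<close>,
  but by at most twice the total amplitude the algorithm ever sends to the query of \<open>e\<close>, and at
  each step these amplitudes square-sum to at most \<open>1\<close> over all variables.

  For \<open>f\<^bsub>[H]\<^esub>\<close> let \<open>k = \<chi>(H) \<ge> 2\<close>. If \<open>n \<le> 2k\<close>, the clique \<open>K\<^sub>k\<close> receives a homomorphism
  from \<open>H\<close> but loses it when any one of its \<open>k choose 2\<close> edges is deleted, as \<open>K\<^sub>k\<close> minus an edge is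
  \<open>(k-1)\<close>-colourable. If \<open>n > 2k\<close>, the join of \<open>K\<^bsub>k-2\<^esub>\<close> with an independent set on the other
  \<open>n - k + 2 > n/2\<close> vertices is \<open>(k-1)\<close>-colourable, yet contains \<open>K\<^sub>k\<close> as soon as any edge inside
  the independent set is added. Either way \<open>f\<^bsub>[H]\<^esub>\<close> has sensitivity at least \<open>n\<^sup>2/16\<close>, so
  \<open>Q(f\<^bsub>[H]\<^esub>) \<ge> n/40\<close>.

  Since \<open>Q\<close> is defined as a least element, one also needs that some algorithm exists: every
  function on \<open>N\<close> variables is computed exactly with \<open>N\<close> queries by Bernstein--Vazirani with a
  clock register that selects the variable queried at each step.
\<close>

section \<open>Phase-oracle query algorithms\<close>

definition oracle_phase :: "(nat \<Rightarrow> 'i option) \<Rightarrow> 'i set \<Rightarrow> nat \<Rightarrow> complex" where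
  "oracle_phase lab x j = (case lab j of Some i \<Rightarrow> if i \<in> x then -1 else 1 | None \<Rightarrow> 1)"

lemma mult_mat_vec_nth_sum:
  "A \<in> carrier_mat d d \<Longrightarrow> dim_vec v = d \<Longrightarrow> i < d \<Longrightarrow> (A *\<^sub>v v) $ i = (\<Sum>j<d. A $$ (i,j) * v $ j)"
  by (auto simp: scalar_prod_def atLeast0LessThan intro!: sum.cong)

lemma oracle_mat_carrier: "oracle_mat d lab x \<in> carrier_mat d d"
  by (simp add: oracle_mat_def)

lemma oracle_mat_mult_vec_nth:
  assumes "dim_vec v = d" "j < d"
  shows "(oracle_mat d lab x *\<^sub>v v) $ j = oracle_phase lab x j * v $ j"
proof -
  have "(oracle_mat d lab x *\<^sub>v v) $ j = (\<Sum>k<d. oracle_mat d lab x $$ (j,k) * v $ k)"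
    by (rule mult_mat_vec_nth_sum[OF oracle_mat_carrier assms])
  also have "\<dots> = (\<Sum>k<d. if k = j then oracle_phase lab x j * v $ j else 0)"
    by (rule sum.cong) (auto simp: oracle_mat_def oracle_phase_def assms)
  finally show ?thesis using assms by simp
qed

lemma norm_oracle_phase [simp]: "cmod (oracle_phase lab x j) = 1"
  by (auto simp: oracle_phase_def split: option.splits)

lemma dim_qstate:
  "(\<And>t. t \<le> T \<Longrightarrow> U t \<in> carrier_mat d d) \<Longrightarrow> t \<le> T \<Longrightarrow> dim_vec (qstate d U lab x t) = d"
  by (induction t) (auto simp: oracle_mat_def)

lemma complex_of_real_cmod_sq: "complex_of_real ((cmod z)\<^sup>2) = cnj z * z"
  by (metis complex_norm_square mult.commute)

lemma unitary_mat_preserves_norm: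
  assumes U: "unitary_mat d U" and v: "dim_vec v = d"
  shows "(\<Sum>i<d. (cmod ((U *\<^sub>v v) $ i))\<^sup>2) = (\<Sum>j<d. (cmod (v $ j))\<^sup>2)"
proof -
  have Uc: "U \<in> carrier_mat d d" and UU: "cadj U * U = 1\<^sub>m d"
    using U unfolding unitary_mat_def by auto
  have orth: "(\<Sum>i<d. cnj (U$$(i,k)) * U$$(i,j)) = (if k = j then 1 else 0)" if "k < d" "j < d" for k j
  proof -
    have "(cadj U * U) $$ (k,j) = (\<Sum>i<d. cnj (U$$(i,k)) * U$$(i,j))"
      using Uc that by (simp add: cadj_def scalar_prod_def atLeast0LessThan)
    thus ?thesis using UU that by simp
  qed
  have "complex_of_real (\<Sum>i<d. (cmod ((U *\<^sub>v v) $ i))\<^sup>2)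
      = (\<Sum>i<d. cnj ((U *\<^sub>v v) $ i) * ((U *\<^sub>v v) $ i))"
    by (simp only: of_real_sum complex_of_real_cmod_sq)
  also have "\<dots> = (\<Sum>i<d. (\<Sum>k<d. cnj (U$$(i,k)) * cnj (v$k)) * (\<Sum>j<d. U$$(i,j) * v$j))"
    by (simp add: mult_mat_vec_nth_sum[OF Uc v])
  also have "\<dots> = (\<Sum>i<d. \<Sum>k<d. \<Sum>j<d. (cnj (v$k) * v$j) * (cnj (U$$(i,k)) * U$$(i,j)))"
    by (simp add: sum_product algebra_simps) (rule sum.cong[OF refl], subst sum.swap, simp add: algebra_simps)
  also have "\<dots> = (\<Sum>k<d. \<Sum>j<d. (cnj (v$k) * v$j) * (\<Sum>i<d. cnj (U$$(i,k)) * U$$(i,j)))"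
    by (subst sum.swap, rule sum.cong[OF refl], subst sum.swap) (simp add: sum_distrib_left)
  also have "\<dots> = (\<Sum>k<d. cnj (v$k) * v$k)"
    by (simp add: orth if_distrib cong: if_cong)
  also have "\<dots> = complex_of_real (\<Sum>j<d. (cmod (v $ j))\<^sup>2)"
    by (simp only: of_real_sum complex_of_real_cmod_sq)
  finally show ?thesis using of_real_eq_iff by blast
qed

lemma computes_bounded_errorD:
  assumes "computes_bounded_error I f T d U lab acc"
  shows "d > 0" "\<And>t. t \<le> T \<Longrightarrow> unitary_mat d (U t)"
    "\<And>x. x \<subseteq> I \<Longrightarrow> f x \<Longrightarrow> accept_prob d U lab acc T x \<ge> 2/3"
    "\<And>x. x \<subseteq> I \<Longrightarrow> \<not> f x \<Longrightarrow> accept_prob d U lab acc T x \<le> 1/3"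
  using assms unfolding computes_bounded_error_def by auto

lemma sum_cmod_qstate_sq:
  assumes "d > 0" "\<And>t. t \<le> T \<Longrightarrow> unitary_mat d (U t)"
  shows "t \<le> T \<Longrightarrow> (\<Sum>j<d. (cmod (qstate d U lab x t $ j))\<^sup>2) = 1"
proof (induction t)
  case 0
  have "(\<Sum>j<d. (cmod (unit_vec d 0 $ j))\<^sup>2) = (\<Sum>j<d. if j = 0 then 1 else 0)"
    by (rule sum.cong) (use assms in auto)
  thus ?case using unitary_mat_preserves_norm[OF assms(2)[of 0]] assms(1) by simp
next
  case (Suc t)
  have car: "\<And>t. t \<le> T \<Longrightarrow> U t \<in> carrier_mat d d"
    using assms(2) unfolding unitary_mat_def by auto
  have dv: "dim_vec (qstate d U lab x t) = d"
    using dim_qstate[of T U d, OF car, of t] Suc.prems by simp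
  have "(\<Sum>j<d. (cmod (qstate d U lab x (Suc t) $ j))\<^sup>2)
      = (\<Sum>j<d. (cmod ((oracle_mat d lab x *\<^sub>v qstate d U lab x t) $ j))\<^sup>2)"
    using unitary_mat_preserves_norm[OF assms(2)[OF Suc.prems]] dv by (simp add: oracle_mat_def)
  also have "\<dots> = (\<Sum>j<d. (cmod (qstate d U lab x t $ j))\<^sup>2)"
    by (rule sum.cong) (auto simp: oracle_mat_mult_vec_nth dv norm_mult)
  finally show ?case using Suc by simp
qed

section \<open>The hybrid argument\<close>

definition query_weight :: "nat \<Rightarrow> (nat \<Rightarrow> complex mat) \<Rightarrow> (nat \<Rightarrow> 'i option) \<Rightarrow> 'i set \<Rightarrow> nat \<Rightarrow> 'i \<Rightarrow> real" where
  "query_weight d U lab x t e = L2_set (\<lambda>j. if lab j = Some e then cmod (qstate d U lab x t $ j) else 0) {..<d}"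

definition state_dist :: "nat \<Rightarrow> (nat \<Rightarrow> complex mat) \<Rightarrow> (nat \<Rightarrow> 'i option) \<Rightarrow> 'i set \<Rightarrow> 'i set \<Rightarrow> nat \<Rightarrow> real" where
  "state_dist d U lab x y t = L2_set (\<lambda>j. cmod (qstate d U lab y t $ j - qstate d U lab x t $ j)) {..<d}"

definition differ_only_at :: "'i \<Rightarrow> 'i set \<Rightarrow> 'i set \<Rightarrow> bool" where
  "differ_only_at e x y \<longleftrightarrow> (\<forall>i. i \<noteq> e \<longrightarrow> (i \<in> x \<longleftrightarrow> i \<in> y))"

lemma norm_oracle_phase_diff_le:
  assumes "differ_only_at e x y"
  shows "cmod (oracle_phase lab y j * p - oracle_phase lab x j * q)
    \<le> cmod (p - q) + (if lab j = Some e then 2 * cmod q else 0)"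
proof (cases "oracle_phase lab y j = oracle_phase lab x j")
  case True
  hence "cmod (oracle_phase lab y j * p - oracle_phase lab x j * q) = cmod (p - q)"
    by (simp add: right_diff_distrib[symmetric] norm_mult)
  thus ?thesis by simp
next
  case False
  hence e: "lab j = Some e" and neg: "oracle_phase lab y j = - oracle_phase lab x j"
    using assms by (auto simp: oracle_phase_def differ_only_at_def split: option.splits if_splits)
  have "oracle_phase lab y j * p - oracle_phase lab x j * q
      = oracle_phase lab y j * (p - q) + oracle_phase lab y j * (2 * q)"
    using neg by (simp add: algebra_simps)
  hence "cmod (oracle_phase lab y j * p - oracle_phase lab x j * q) \<le> cmod (p - q) + 2 * cmod q"
    by (metis norm_triangle_ineq norm_mult norm_oracle_phase mult_1 norm_numeral)
  thus ?thesis using e by simp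
qed

lemma state_dist_le_query_weight:
  assumes uni: "\<And>t. t \<le> T \<Longrightarrow> unitary_mat d (U t)" and xy: "differ_only_at e x y"
  shows "t \<le> T \<Longrightarrow> state_dist d U lab x y t \<le> 2 * (\<Sum>s<t. query_weight d U lab x s e)"
proof (induction t)
  case 0 thus ?case by (simp add: state_dist_def L2_set_0')
next
  case (Suc t)
  have car: "\<And>t. t \<le> T \<Longrightarrow> U t \<in> carrier_mat d d" using uni unfolding unitary_mat_def by auto
  define a where "a = oracle_mat d lab y *\<^sub>v qstate d U lab y t"
  define b where "b = oracle_mat d lab x *\<^sub>v qstate d U lab x t"
  define w where "w = vec d (\<lambda>j. a $ j - b $ j)"
  have dy: "dim_vec (qstate d U lab y t) = d" and dx: "dim_vec (qstate d U lab x t) = d"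
    using dim_qstate[of T U d, OF car, of t] Suc.prems by auto
  have da: "dim_vec a = d" and db: "dim_vec b = d"
    unfolding a_def b_def by (simp_all add: oracle_mat_def)
  have Uc: "U (Suc t) \<in> carrier_mat d d" using car Suc by auto
  have lin: "qstate d U lab y (Suc t) $ i - qstate d U lab x (Suc t) $ i = (U (Suc t) *\<^sub>v w) $ i"
    if "i < d" for i
    using that mult_mat_vec_nth_sum[OF Uc da] mult_mat_vec_nth_sum[OF Uc db] mult_mat_vec_nth_sum[OF Uc, of w]
    by (simp add: a_def[symmetric] b_def[symmetric] w_def sum_subtractf[symmetric] right_diff_distrib)
  have "state_dist d U lab x y (Suc t) = L2_set (\<lambda>j. cmod ((U (Suc t) *\<^sub>v w) $ j)) {..<d}"
    unfolding state_dist_def by (rule L2_set_cong) (auto simp del: qstate.simps simp: lin)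
  also have "\<dots> = L2_set (\<lambda>j. cmod (w $ j)) {..<d}"
    unfolding L2_set_def using unitary_mat_preserves_norm[OF uni[OF Suc.prems], of w] by (simp add: w_def)
  also have "\<dots> \<le> L2_set (\<lambda>j. cmod (qstate d U lab y t $ j - qstate d U lab x t $ j)
        + (if lab j = Some e then 2 * cmod (qstate d U lab x t $ j) else 0)) {..<d}"
    by (rule L2_set_mono)
      (use norm_oracle_phase_diff_le[OF xy] in \<open>auto simp: w_def a_def b_def oracle_mat_mult_vec_nth dx dy\<close>)
  also have "\<dots> \<le> state_dist d U lab x y t
      + L2_set (\<lambda>j. 2 * (if lab j = Some e then cmod (qstate d U lab x t $ j) else 0)) {..<d}"
    unfolding state_dist_def
    by (rule order_trans[OF L2_set_triangle_ineq]) (simp add: if_distrib cong: if_cong)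
  also have "\<dots> = state_dist d U lab x y t + 2 * query_weight d U lab x t e"
    by (simp add: query_weight_def L2_set_right_distrib)
  also have "\<dots> \<le> 2 * (\<Sum>s<Suc t. query_weight d U lab x s e)"
    using Suc by simp
  finally show ?case .
qed

lemma L2_set_cmod_le_add_dist:
  assumes "A \<subseteq> B" "finite B"
  shows "L2_set (\<lambda>j. cmod (p j)) A \<le> L2_set (\<lambda>j. cmod (q j)) A + L2_set (\<lambda>j. cmod (p j - q j)) B"
proof -
  have "L2_set (\<lambda>j. cmod (p j)) A \<le> L2_set (\<lambda>j. cmod (q j) + cmod (p j - q j)) A"
    by (rule L2_set_mono) (auto intro: norm_triangle_sub)
  also have "\<dots> \<le> L2_set (\<lambda>j. cmod (q j)) A + L2_set (\<lambda>j. cmod (p j - q j)) A"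
    by (rule L2_set_triangle_ineq)
  also have "L2_set (\<lambda>j. cmod (p j - q j)) A \<le> L2_set (\<lambda>j. cmod (p j - q j)) B"
    unfolding L2_set_def by (rule real_sqrt_le_mono, rule sum_mono2) (use assms in auto)
  finally show ?thesis by simp
qed

text \<open>Acceptance amplitudes \<open>\<ge> \<surd>(2/3) > 4/5\<close> and \<open>\<le> \<surd>(1/3) < 3/5\<close> are \<open>1/5\<close> apart.\<close>
lemma state_dist_ge_if_distinguished:
  assumes cb: "computes_bounded_error I f T d U lab acc"
    and x: "x \<subseteq> I" and y: "y \<subseteq> I" and fxy: "f x \<noteq> f y"
  shows "1/5 \<le> state_dist d U lab x y T"
proof -
  define amp where "amp z = sqrt (accept_prob d U lab acc T z)" for z
  have amp_L2: "amp z = L2_set (\<lambda>j. cmod (qstate d U lab z T $ j)) (acc \<inter> {..<d})" for z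
    unfolding L2_set_def accept_prob_def amp_def ..
  have tri: "amp z \<le> amp z' + state_dist d U lab x y T" if "{z, z'} = {x, y}" for z z'
    using that L2_set_cmod_le_add_dist[of "acc \<inter> {..<d}" "{..<d}" "\<lambda>j. qstate d U lab z T $ j"
        "\<lambda>j. qstate d U lab z' T $ j"]
    unfolding amp_L2 state_dist_def by (auto simp: doubleton_eq_iff norm_minus_commute)
  have hi: "4/5 \<le> amp z" if "z \<subseteq> I" "f z" for z
    unfolding amp_def
    by (rule real_le_rsqrt) (use computes_bounded_errorD(3)[OF cb that] in \<open>simp add: power2_eq_square\<close>)
  have lo: "amp z \<le> 3/5" if "z \<subseteq> I" "\<not> f z" for z
    unfolding amp_def
    by (rule real_le_lsqrt) (use computes_bounded_errorD(4)[OF cb that] in \<open>simp_all add: power2_eq_square\<close>)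
  show ?thesis
  proof (cases "f x")
    case True
    thus ?thesis using hi[OF x] lo[OF y] fxy tri[of x y] by force
  next
    case False
    thus ?thesis using lo[OF x] hi[OF y] fxy tri[of y x] by force
  qed
qed

lemma sum_query_weight_sq_le_1:
  assumes cb: "computes_bounded_error I f T d U lab acc" and s: "s \<le> T" and S: "finite S"
  shows "(\<Sum>e\<in>S. (query_weight d U lab x s e)\<^sup>2) \<le> 1"
proof -
  let ?c = "\<lambda>j. (cmod (qstate d U lab x s $ j))\<^sup>2"
  have "(\<Sum>e\<in>S. (query_weight d U lab x s e)\<^sup>2) = (\<Sum>e\<in>S. \<Sum>j<d. if lab j = Some e then ?c j else 0)"
    unfolding query_weight_def L2_set_def by (auto simp: sum_nonneg intro!: sum.cong)
  also have "\<dots> = (\<Sum>j<d. \<Sum>e\<in>S. if lab j = Some e then ?c j else 0)"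
    by (rule sum.swap)
  also have "\<dots> \<le> (\<Sum>j<d. ?c j)"
  proof (rule sum_mono)
    fix j
    show "(\<Sum>e\<in>S. if lab j = Some e then ?c j else 0) \<le> ?c j"
      using S by (cases "lab j") auto
  qed
  also have "\<dots> = 1"
    using sum_cmod_qstate_sq[OF computes_bounded_errorD(1,2)[OF cb] s] .
  finally show ?thesis .
qed

definition sensitive_at :: "'i set \<Rightarrow> ('i set \<Rightarrow> bool) \<Rightarrow> 'i set \<Rightarrow> 'i \<Rightarrow> bool" where
  "sensitive_at I f x e \<longleftrightarrow> (\<exists>y. y \<subseteq> I \<and> differ_only_at e x y \<and> f y \<noteq> f x)"

definition sensitivity_at_least :: "'i set \<Rightarrow> ('i set \<Rightarrow> bool) \<Rightarrow> nat \<Rightarrow> bool" where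
  "sensitivity_at_least I f s \<longleftrightarrow>
     (\<exists>x S. x \<subseteq> I \<and> finite S \<and> s \<le> card S \<and> (\<forall>e\<in>S. sensitive_at I f x e))"

lemma sensitive_at_query_weight_ge:
  assumes cb: "computes_bounded_error I f T d U lab acc" and x: "x \<subseteq> I"
    and sens: "sensitive_at I f x e"
  shows "1/10 \<le> (\<Sum>s<T. query_weight d U lab x s e)"
proof -
  obtain y where y: "y \<subseteq> I" "differ_only_at e x y" "f y \<noteq> f x"
    using sens unfolding sensitive_at_def by blast
  have "1/5 \<le> state_dist d U lab x y T"
    using state_dist_ge_if_distinguished[OF cb x y(1)] y(3) by simp
  also have "\<dots> \<le> 2 * (\<Sum>s<T. query_weight d U lab x s e)"
    by (rule state_dist_le_query_weight[OF computes_bounded_errorD(2)[OF cb] y(2) order_refl])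
  finally show ?thesis by simp
qed

text \<open>The square-root sensitivity bound: by Cauchy--Schwarz each time step distributes
  query weight at most \<open>\<surd>|S|\<close> over \<open>S\<close>, while every \<open>e \<in> S\<close> needs weight \<open>1/10\<close> in total.\<close>
lemma card_sensitive_le:
  assumes cb: "computes_bounded_error I f T d U lab acc" and x: "x \<subseteq> I" and S: "finite S"
    and sens: "\<forall>e\<in>S. sensitive_at I f x e"
  shows "real (card S) \<le> 100 * (real T)\<^sup>2"
proof -
  define r where "r = sqrt (real (card S))"
  have per_step: "(\<Sum>e\<in>S. query_weight d U lab x s e) \<le> r" if "s < T" for s
  proof -
    have "L2_set (query_weight d U lab x s) S \<le> 1"
      using sum_query_weight_sq_le_1[OF cb _ S, of s x] that unfolding L2_set_def by simp
    hence "L2_set (query_weight d U lab x s) S * r \<le> r"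
      by (simp add: r_def mult_left_le_one_le)
    moreover have "(\<Sum>e\<in>S. query_weight d U lab x s e) \<le> L2_set (query_weight d U lab x s) S * r"
      using L2_set_mult_ineq[of "query_weight d U lab x s" "\<lambda>_. 1" S]
      by (simp add: query_weight_def L2_set_constant r_def)
    ultimately show ?thesis by linarith
  qed
  have "real (card S) / 10 \<le> (\<Sum>e\<in>S. \<Sum>s<T. query_weight d U lab x s e)"
    using sum_mono[of S "\<lambda>_. 1/10" "\<lambda>e. \<Sum>s<T. query_weight d U lab x s e"]
      sensitive_at_query_weight_ge[OF cb x] sens by simp
  also have "\<dots> = (\<Sum>s<T. \<Sum>e\<in>S. query_weight d U lab x s e)"
    by (rule sum.swap)
  also have "\<dots> \<le> real T * r"
    using sum_mono[of "{..<T}" _ "\<lambda>_. r"] per_step by simp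
  finally have "r * r \<le> (10 * real T) * r"
    by (simp add: r_def)
  moreover have r_nonneg: "r \<ge> 0" by (simp add: r_def)
  ultimately have "r \<le> 10 * real T"
    by (cases "r = 0") (simp_all add: mult_le_cancel_right)
  hence "r * r \<le> (10 * real T) * (10 * real T)"
    using r_nonneg by (intro mult_mono) auto
  thus ?thesis by (simp add: r_def power2_eq_square)
qed

section \<open>Sensitivity of the homomorphism function\<close>

definition colourable :: "nat \<Rightarrow> nat set set \<Rightarrow> nat \<Rightarrow> bool" where
  "colourable n EH m \<longleftrightarrow> (\<exists>h. (\<forall>u<n. h u < m) \<and> (\<forall>u v. {u,v} \<in> EH \<longrightarrow> h u \<noteq> h v))"

definition chromatic_number :: "nat \<Rightarrow> nat set set \<Rightarrow> nat" where
  "chromatic_number n EH = (LEAST m. colourable n EH m)"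

definition clique_edges :: "nat set \<Rightarrow> nat set set" where
  "clique_edges A = {{a,b} | a b. a \<in> A \<and> b \<in> A \<and> a \<noteq> b}"

definition join_edges :: "nat \<Rightarrow> nat \<Rightarrow> nat set set" where
  "join_edges n m = {{a,b} | a b. a < n \<and> b < n \<and> a \<noteq> b \<and> (a < m \<or> b < m)}"

lemma all_edgesD: "{u,v} \<in> all_edges n \<Longrightarrow> u < n \<and> v < n \<and> u \<noteq> v"
  unfolding all_edges_def by (auto simp: doubleton_eq_iff)

lemma clique_edgesD: "{u,v} \<in> clique_edges A \<Longrightarrow> u \<in> A \<and> v \<in> A \<and> u \<noteq> v"
  unfolding clique_edges_def by (auto simp: doubleton_eq_iff)

lemma clique_edges_eq: "clique_edges A = {B. B \<subseteq> A \<and> card B = 2}"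
  unfolding clique_edges_def by (auto simp: card_2_iff)

lemma card_clique_edges: "finite A \<Longrightarrow> card (clique_edges A) = card A choose 2"
  unfolding clique_edges_eq by (rule n_subsets)

lemma finite_clique_edges: "finite A \<Longrightarrow> finite (clique_edges A)"
  unfolding clique_edges_eq by (rule finite_subset[of _ "Pow A"]) auto

lemma clique_edges_subset_all_edges: "A \<subseteq> {..<n} \<Longrightarrow> clique_edges A \<subseteq> all_edges n"
  unfolding clique_edges_def all_edges_def by auto

lemma join_edges_subset_all_edges: "join_edges n m \<subseteq> all_edges n"
  unfolding join_edges_def all_edges_def by auto

lemma colourable_if_has_hom:
  assumes "has_hom n EH EG" "\<forall>w<n. g w < m" "\<forall>a b. {a,b} \<in> EG \<longrightarrow> g a \<noteq> g b"
  shows "colourable n EH m"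
proof -
  obtain h where h: "\<forall>u<n. h u < n" "\<forall>u v. {u, v} \<in> EH \<longrightarrow> {h u, h v} \<in> EG"
    using assms(1) unfolding has_hom_def by blast
  show ?thesis unfolding colourable_def
    by (rule exI[of _ "\<lambda>u. g (h u)"]) (use h assms(2,3) in auto)
qed

lemma has_hom_if_clique:
  assumes EH: "EH \<subseteq> all_edges n" and c: "colourable n EH m" and \<phi>: "\<forall>i<m. \<phi> i < n"
    and clique: "\<forall>i j. i < m \<longrightarrow> j < m \<longrightarrow> i \<noteq> j \<longrightarrow> {\<phi> i, \<phi> j} \<in> EG"
  shows "has_hom n EH EG"
proof -
  obtain h where h: "\<forall>u<n. h u < m" "\<forall>u v. {u,v} \<in> EH \<longrightarrow> h u \<noteq> h v"
    using c unfolding colourable_def by blast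
  show ?thesis unfolding has_hom_def
  proof (rule exI[of _ "\<lambda>u. \<phi> (h u)"], intro conjI allI impI)
    fix u assume "u < n" thus "\<phi> (h u) < n" using h \<phi> by auto
  next
    fix u v assume uv: "{u,v} \<in> EH"
    hence "u < n" "v < n" using EH all_edgesD by blast+
    thus "{\<phi> (h u), \<phi> (h v)} \<in> EG" using h uv clique by auto
  qed
qed

lemma chromatic_number:
  assumes EH: "EH \<subseteq> all_edges n" and ne: "EH \<noteq> {}"
  defines "k \<equiv> chromatic_number n EH"
  shows "colourable n EH k" "k \<le> n" "2 \<le> k" "\<not> colourable n EH (k - 1)"
proof -
  have "colourable n EH n" unfolding colourable_def
    by (rule exI[of _ id]) (use EH all_edgesD in auto)
  thus colk: "colourable n EH k" "k \<le> n"
    unfolding k_def chromatic_number_def by (auto intro: LeastI Least_le)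
  obtain u v where uv: "{u,v} \<in> EH"
    using ne EH unfolding all_edges_def by blast
  hence "u < n" "v < n" using EH all_edgesD by blast+
  moreover obtain h where "\<forall>u<n. h u < k" "\<forall>u v. {u,v} \<in> EH \<longrightarrow> h u \<noteq> h v"
    using colk unfolding colourable_def by blast
  ultimately have "h u < k" "h v < k" "h u \<noteq> h v" using uv by auto
  thus "2 \<le> k" by linarith
  thus "\<not> colourable n EH (k - 1)"
    using not_less_Least[of "k - 1" "colourable n EH"] unfolding k_def chromatic_number_def by simp
qed

text \<open>The colouring: recolour \<open>b\<close> by \<open>a\<close> and close the gap above \<open>b\<close>.\<close>
lemma colourable_if_has_hom_clique_minus_edge:
  assumes hom: "has_hom n EH (clique_edges {..<k} - {{a,b}})" and ab: "a < k" "b < k" "a \<noteq> b"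
  shows "colourable n EH (k - 1)"
proof (rule colourable_if_has_hom[OF hom])
  define merge where "merge w = (if w = b then a else w)" for w
  define g where "g w = (if k \<le> w then 0 else if merge w > b then merge w - 1 else merge w)" for w
  show "\<forall>w<n. g w < k - 1"
    using ab unfolding g_def merge_def by auto
  show "\<forall>p q. {p,q} \<in> clique_edges {..<k} - {{a,b}} \<longrightarrow> g p \<noteq> g q"
  proof (intro allI impI)
    fix p q assume "{p,q} \<in> clique_edges {..<k} - {{a,b}}"
    hence pq: "p < k" "q < k" "p \<noteq> q" "{p,q} \<noteq> {a,b}"
      using clique_edgesD[of p q "{..<k}"] by auto
    hence "merge p \<noteq> merge q" "merge p \<noteq> b" "merge q \<noteq> b"
      using ab unfolding merge_def by (auto simp: doubleton_eq_iff)
    thus "g p \<noteq> g q"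
      using pq unfolding g_def by auto
  qed
qed

lemma colourable_if_has_hom_join:
  assumes "has_hom n EH (join_edges n m)"
  shows "colourable n EH (Suc m)"
proof (rule colourable_if_has_hom[OF assms, of "\<lambda>w. min w m"])
  show "\<forall>p q. {p,q} \<in> join_edges n m \<longrightarrow> min p m \<noteq> min q m"
    unfolding join_edges_def by (auto simp: doubleton_eq_iff)
qed auto

lemma has_hom_join_insert_edge:
  assumes EH: "EH \<subseteq> all_edges n" and c: "colourable n EH (Suc (Suc m))"
    and ab: "m \<le> a" "a < n" "m \<le> b" "b < n" "a \<noteq> b"
  shows "has_hom n EH (insert {a,b} (join_edges n m))"
proof (rule has_hom_if_clique[OF EH c])
  define \<phi> where "\<phi> i = (if i < m then i else if i = m then a else b)" for i
  show "\<forall>i<Suc (Suc m). \<phi> i < n"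
    using ab unfolding \<phi>_def by auto
  show "\<forall>i j. i < Suc (Suc m) \<longrightarrow> j < Suc (Suc m) \<longrightarrow> i \<noteq> j \<longrightarrow>
      {\<phi> i, \<phi> j} \<in> insert {a,b} (join_edges n m)"
  proof (intro allI impI)
    fix i j assume ij: "i < Suc (Suc m)" "j < Suc (Suc m)" "i \<noteq> j"
    show "{\<phi> i, \<phi> j} \<in> insert {a,b} (join_edges n m)"
    proof (cases "i < m \<or> j < m")
      case True
      hence "\<phi> i < n" "\<phi> j < n" "\<phi> i \<noteq> \<phi> j" "\<phi> i < m \<or> \<phi> j < m"
        using ab ij unfolding \<phi>_def by auto
      thus ?thesis unfolding join_edges_def by blast
    next
      case False
      hence "{i,j} = {m, Suc m}" using ij by auto
      hence "{\<phi> i, \<phi> j} = {a,b}" unfolding \<phi>_def by (auto simp: doubleton_eq_iff)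
      thus ?thesis by simp
    qed
  qed
qed

lemma square_le_16_choose_two:
  fixes m n :: nat
  assumes "2 \<le> m" "n \<le> 2 * m"
  shows "n * n \<le> 16 * (m choose 2)"
proof -
  have "n * n \<le> (2 * m) * (2 * m)" using assms by (intro mult_le_mono) auto
  also have "\<dots> = 4 * m * m" by simp
  also have "\<dots> \<le> 4 * m * (2 * (m - 1))" using assms by (intro mult_le_mono) auto
  also have "\<dots> = 8 * (m * (m - 1))" by simp
  also have "\<dots> = 16 * (m choose 2)"
    unfolding choose_two by (cases "even m") (auto simp: dvd_mult_div_cancel)
  finally show ?thesis .
qed

lemma sensitivity_f_hom_clique:
  assumes EH: "EH \<subseteq> all_edges n" and k: "colourable n EH k" "\<not> colourable n EH (k - 1)" "k \<le> n"
  shows "sensitivity_at_least (all_edges n) (f_hom n EH) (k choose 2)"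
proof -
  define x where "x = clique_edges {..<k}"
  have x: "x \<subseteq> all_edges n"
    unfolding x_def using k(3) by (intro clique_edges_subset_all_edges) auto
  have "f_hom n EH x"
    unfolding f_hom_def x_def
    by (rule has_hom_if_clique[OF EH k(1), of id]) (use k(3) in \<open>auto simp: clique_edges_def\<close>)
  moreover have "\<not> f_hom n EH (x - {e})" if "e \<in> x" for e
    using that k(2) colourable_if_has_hom_clique_minus_edge
    unfolding x_def f_hom_def clique_edges_def by auto
  ultimately have "sensitive_at (all_edges n) (f_hom n EH) x e" if "e \<in> x" for e
    unfolding sensitive_at_def differ_only_at_def
    by (intro exI[of _ "x - {e}"]) (use that x in auto)
  thus ?thesis
    unfolding sensitivity_at_least_def using x
    by (intro exI[of _ x]) (simp add: x_def finite_clique_edges card_clique_edges)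
qed

lemma sensitivity_f_hom_join:
  assumes EH: "EH \<subseteq> all_edges n"
    and m: "colourable n EH (Suc (Suc m))" "\<not> colourable n EH (Suc m)"
  shows "sensitivity_at_least (all_edges n) (f_hom n EH) (n - m choose 2)"
proof -
  define x where "x = join_edges n m"
  define S where "S = clique_edges {m..<n}"
  have "\<not> f_hom n EH x"
    using m(2) colourable_if_has_hom_join unfolding f_hom_def x_def by blast
  moreover have "f_hom n EH (insert e x)" if "e \<in> S" for e
    using that has_hom_join_insert_edge[OF EH m(1)]
    unfolding f_hom_def x_def S_def clique_edges_def by auto
  moreover have "S \<subseteq> all_edges n"
    unfolding S_def by (intro clique_edges_subset_all_edges) auto
  ultimately have "sensitive_at (all_edges n) (f_hom n EH) x e" if "e \<in> S" for e
    unfolding sensitive_at_def differ_only_at_def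
    by (intro exI[of _ "insert e x"]) (use that join_edges_subset_all_edges in \<open>auto simp: x_def\<close>)
  thus ?thesis
    unfolding sensitivity_at_least_def using join_edges_subset_all_edges
    by (intro exI[of _ x] exI[of _ S]) (simp add: x_def S_def finite_clique_edges card_clique_edges)
qed

lemma sensitivity_f_hom:
  assumes n: "n \<ge> 2" and EH: "EH \<subseteq> all_edges n" and ne: "EH \<noteq> {}"
  obtains s where "n * n \<le> 16 * s" "sensitivity_at_least (all_edges n) (f_hom n EH) s"
proof -
  define k where "k = chromatic_number n EH"
  note k = chromatic_number[OF EH ne, folded k_def]
  show ?thesis
  proof (cases "n \<le> 2 * k")
    case True
    thus ?thesis
      using that sensitivity_f_hom_clique[OF EH k(1,4,2)] square_le_16_choose_two[OF k(3)] by blast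
  next
    case False
    define m where "m = k - 2"
    have mk: "k = Suc (Suc m)" and "n \<le> 2 * (n - m)" "2 \<le> n - m"
      using False k(2,3) unfolding m_def by auto
    moreover have "sensitivity_at_least (all_edges n) (f_hom n EH) (n - m choose 2)"
      by (rule sensitivity_f_hom_join[OF EH]) (use k(1,4) mk in simp_all)
    ultimately show ?thesis
      using that square_le_16_choose_two by blast
  qed
qed

section \<open>An exact query algorithm for every function\<close>

lemma mult_add_less:
  fixes N M q c :: nat
  assumes "q < M" "c < N"
  shows "q * N + c < N * M"
proof -
  have "q * N + c < (q + 1) * N" using assms by simp
  also have "\<dots> \<le> M * N" using assms by (intro mult_le_mono) auto
  finally show ?thesis by (simp add: mult.commute)
qed

lemma sum_lessThan_mult:
  fixes N M :: nat
  assumes N: "N > 0"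
  shows "(\<Sum>k<N * M. g k) = (\<Sum>q<M. \<Sum>c<N. g (q * N + c))"
proof -
  have "bij_betw (\<lambda>(q,c). q * N + c) ({..<M} \<times> {..<N}) {..<N * M}"
    by (rule bij_betw_byWitness[where f' = "\<lambda>k. (k div N, k mod N)"])
      (use N mult_add_less[of _ M _ N] in \<open>auto simp: less_mult_imp_div_less mult.commute\<close>)
  hence "(\<Sum>k<N * M. g k) = (\<Sum>(q,c)\<in>{..<M} \<times> {..<N}. g (q * N + c))"
    by (simp add: sum.reindex_bij_betw[symmetric] case_prod_unfold)
  thus ?thesis by (simp add: sum.cartesian_product)
qed

lemma set_decode_subset: "q < 2^N \<Longrightarrow> set_decode q \<subseteq> {..<N}"
proof
  fix i assume q: "q < 2^N" and i: "i \<in> set_decode q"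
  hence "odd (q div 2^i)" by (simp add: set_decode_def)
  hence "q div 2^i \<noteq> 0" by (metis dvd_0_right)
  hence "2^i \<le> q" by (metis div_less not_less)
  hence "(2::nat)^i < 2^N" using q by linarith
  thus "i \<in> {..<N}" by simp
qed

lemma set_encode_less_power: "A \<subseteq> {..<N} \<Longrightarrow> set_encode A < 2^N"
proof -
  assume A: "A \<subseteq> {..<N}"
  have "set_encode A = (\<Sum>i\<in>A. 2^i)" by (simp add: set_encode_def)
  also have "\<dots> \<le> (\<Sum>i\<in>{0..<N}. (2::nat)^i)" using A by (intro sum_mono2) auto
  also have "\<dots> = 2^N - 1" by (rule sum_power2)
  also have "\<dots> < 2^N" by simp
  finally show ?thesis .
qed

lemma bij_betw_set_decode: "bij_betw set_decode {..<2^N} (Pow {..<N})"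
proof (rule bij_betw_byWitness[where f' = set_encode])
  show "\<forall>a\<in>{..<2 ^ N}. set_encode (set_decode a) = a" by simp
  show "\<forall>a'\<in>Pow {..<N}. set_decode (set_encode a') = a'"
    by (metis PowD finite_lessThan finite_subset set_encode_inverse)
  show "set_decode ` {..<2 ^ N} \<subseteq> Pow {..<N}" using set_decode_subset by auto
  show "set_encode ` Pow {..<N} \<subseteq> {..<2 ^ N}" using set_encode_less_power by auto
qed

lemma sum_Pow_insert:
  assumes "finite A" "a \<notin> A"
  shows "(\<Sum>X\<in>Pow (insert a A). g X) = (\<Sum>X\<in>Pow A. g X + g (insert a X))"
proof -
  have "inj_on (insert a) (Pow A)"
    using assms(2) by (intro inj_onI) (metis PowD Diff_insert_absorb subset_iff)
  moreover have "Pow A \<inter> insert a ` Pow A = {}" using assms(2) by auto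
  ultimately show ?thesis
    using assms(1) by (simp add: Pow_insert sum.union_disjoint sum.reindex sum.distrib)
qed

lemma parity_card_Int_insert:
  assumes "finite P" "N \<notin> P"
  shows "(-1::complex)^card (A \<inter> insert N P) = (if N \<in> A then -1 else 1) * (-1)^card (A \<inter> P)"
  using assms by (simp add: Int_insert_right)

lemma sum_Pow_parity_product:
  "A \<subseteq> {..<N} \<Longrightarrow> B \<subseteq> {..<N} \<Longrightarrow>
   (\<Sum>P\<in>Pow {..<N}. (-1::complex)^card (A \<inter> P) * (-1)^card (P \<inter> B)) = (if A = B then 2^N else 0)"
proof (induction N arbitrary: A B)
  case 0 thus ?case by simp
next
  case (Suc N)
  define \<epsilon> :: complex where "\<epsilon> = (if N \<in> A then -1 else 1) * (if N \<in> B then -1 else 1)"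
  let ?p = "\<lambda>A P B. (-1::complex)^card (A \<inter> P) * (-1)^card (P \<inter> B)"
  have del: "?p A P B = ?p (A - {N}) P (B - {N})"
    and ins: "?p A (insert N P) B = \<epsilon> * ?p (A - {N}) P (B - {N})" if "P \<in> Pow {..<N}" for P
  proof -
    have "A \<inter> P = (A - {N}) \<inter> P" "P \<inter> B = P \<inter> (B - {N})" "finite P" "N \<notin> P"
      using that by (auto intro: finite_subset)
    thus "?p A P B = ?p (A - {N}) P (B - {N})" "?p A (insert N P) B = \<epsilon> * ?p (A - {N}) P (B - {N})"
      using parity_card_Int_insert[of P N A] parity_card_Int_insert[of P N B]
      by (simp_all add: \<epsilon>_def Int_commute)
  qed
  have "(\<Sum>P\<in>Pow {..<Suc N}. ?p A P B) = (\<Sum>P\<in>Pow {..<N}. ?p A P B + ?p A (insert N P) B)"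
    unfolding lessThan_Suc by (rule sum_Pow_insert) auto
  also have "\<dots> = (1 + \<epsilon>) * (\<Sum>P\<in>Pow {..<N}. ?p (A - {N}) P (B - {N}))"
    unfolding sum_distrib_left by (intro sum.cong refl) (simp only: ins del, simp add: algebra_simps)
  also have "\<dots> = (1 + \<epsilon>) * (if A - {N} = B - {N} then 2^N else 0)"
    using Suc.prems by (subst Suc.IH) auto
  also have "\<dots> = (if A = B then 2^Suc N else 0)"
  proof (cases "N \<in> A \<longleftrightarrow> N \<in> B")
    case True
    hence "A - {N} = B - {N} \<longleftrightarrow> A = B" by blast
    thus ?thesis using True by (auto simp: \<epsilon>_def)
  qed (auto simp: \<epsilon>_def)
  finally show ?case .
qed

lemma sum_set_decode_parity_product:
  "A \<subseteq> {..<N} \<Longrightarrow> B \<subseteq> {..<N} \<Longrightarrow>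
   (\<Sum>q<2^N. (-1::complex)^(card (A \<inter> set_decode q)) * (-1)^(card (set_decode q \<inter> B))) = (if A = B then 2^N else 0)"
  using sum.reindex_bij_betw[OF bij_betw_set_decode[of N], of "\<lambda>Q. (-1::complex)^(card (A \<inter> Q)) * (-1)^(card (Q \<inter> B))"]
    sum_Pow_parity_product[of A N B] by simp

definition perm_mat :: "nat \<Rightarrow> (nat \<Rightarrow> nat) \<Rightarrow> complex mat" where
  "perm_mat d \<sigma> = mat d d (\<lambda>(j,k). if j = \<sigma> k then 1 else 0)"

lemma unitary_perm_mat:
  assumes bij: "bij_betw \<sigma> {..<d} {..<d}"
  shows "unitary_mat d (perm_mat d \<sigma>)"
proof -
  have cad: "cadj (perm_mat d \<sigma>) = mat d d (\<lambda>(j,k). if k = \<sigma> j then 1 else 0)"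
    unfolding cadj_def perm_mat_def by (rule eq_matI) auto
  have img: "\<sigma> k < d" if "k < d" for k using bij that unfolding bij_betw_def by auto
  have inj: "\<sigma> j = \<sigma> l \<Longrightarrow> j < d \<Longrightarrow> l < d \<Longrightarrow> j = l" for j l
    using bij unfolding bij_betw_def inj_on_def by auto
  have r: "(\<Sum>k<d. g (\<sigma> k)) = (\<Sum>k<d. g k)" for g :: "nat \<Rightarrow> complex"
    by (rule sum.reindex_bij_betw[OF bij])
  have "perm_mat d \<sigma> * cadj (perm_mat d \<sigma>) = 1\<^sub>m d"
  proof (rule eq_matI)
    fix j l assume jl: "j < dim_row (1\<^sub>m d)" "l < dim_col (1\<^sub>m d)"
    have "(perm_mat d \<sigma> * cadj (perm_mat d \<sigma>)) $$ (j,l) = (\<Sum>k<d. (if j = \<sigma> k then 1 else 0) * (if l = \<sigma> k then 1 else 0))"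
      using jl unfolding cad unfolding perm_mat_def by (simp add: scalar_prod_def atLeast0LessThan)
    also have "\<dots> = (\<Sum>k<d. (if j = k then 1 else 0) * (if l = k then 1 else 0))"
      by (rule r[of "\<lambda>k. (if j = k then 1 else 0) * (if l = k then 1 else 0)"])
    also have "\<dots> = 1\<^sub>m d $$ (j,l)" using jl
      by (subst sum.cong[OF refl, of _ _ "\<lambda>k. if k = j then (if l = j then 1 else 0) else 0"]) auto
    finally show "(perm_mat d \<sigma> * cadj (perm_mat d \<sigma>)) $$ (j,l) = 1\<^sub>m d $$ (j,l)" .
  qed (auto simp: perm_mat_def cadj_def)
  moreover have "cadj (perm_mat d \<sigma>) * perm_mat d \<sigma> = 1\<^sub>m d"
  proof (rule eq_matI)
    fix j l assume jl: "j < dim_row (1\<^sub>m d)" "l < dim_col (1\<^sub>m d)"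
    have "(cadj (perm_mat d \<sigma>) * perm_mat d \<sigma>) $$ (j,l) = (\<Sum>k<d. (if k = \<sigma> j then 1 else 0) * (if k = \<sigma> l then 1 else 0))"
      using jl unfolding cad unfolding perm_mat_def by (simp add: scalar_prod_def atLeast0LessThan)
    also have "\<dots> = (if \<sigma> j = \<sigma> l then 1 else 0)"
      using jl img
      by (subst sum.cong[OF refl, of _ _ "\<lambda>k. if k = \<sigma> j then (if \<sigma> l = \<sigma> j then 1 else 0) else 0"]) auto
    also have "\<dots> = 1\<^sub>m d $$ (j,l)" using jl inj by auto
    finally show "(cadj (perm_mat d \<sigma>) * perm_mat d \<sigma>) $$ (j,l) = 1\<^sub>m d $$ (j,l)" .
  qed (auto simp: perm_mat_def cadj_def)
  ultimately show ?thesis unfolding unitary_mat_def by (simp add: perm_mat_def)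
qed

definition walsh_norm :: "nat \<Rightarrow> complex" where
  "walsh_norm N = complex_of_real (1 / sqrt (2^N))"

text \<open>Basis state \<open>j < N * 2^N\<close> encodes the pair \<open>(set_decode (j div N), j mod N)\<close>:
  a subset of the \<open>N\<close> variables and a clock.\<close>
definition subset_reg :: "nat \<Rightarrow> nat \<Rightarrow> nat set" where
  "subset_reg N j = set_decode (j div N)"

text \<open>The Hadamard transform on the subset register, acting trivially on the clock.\<close>
definition walsh_mat :: "nat \<Rightarrow> complex mat" where
  "walsh_mat N = mat (N * 2^N) (N * 2^N) (\<lambda>(j,k).
     if j mod N = k mod N then walsh_norm N * (-1)^card (subset_reg N j \<inter> subset_reg N k) else 0)"

lemma walsh_norm_sq: "walsh_norm N * walsh_norm N * 2^N = 1"
proof -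
  have "(1 / sqrt (2^N)) * (1 / sqrt (2^N)) * (2::real)^N = 1"
    by (simp add: real_sqrt_mult[symmetric])
  thus ?thesis unfolding walsh_norm_def
    by (metis of_real_1 of_real_mult of_real_numeral of_real_power)
qed

lemma subset_reg_subset: "j < N * 2^N \<Longrightarrow> subset_reg N j \<subseteq> {..<N}"
  unfolding subset_reg_def by (rule set_decode_subset) (simp add: less_mult_imp_div_less mult.commute)

lemma subset_reg_mult_add: "c < N \<Longrightarrow> subset_reg N (q * N + c) = set_decode q"
  by (simp add: subset_reg_def)

lemma clock_subset_reg_eq_iff:
  "j mod N = l mod N \<and> subset_reg N j = subset_reg N l \<longleftrightarrow> j = l"
proof
  assume a: "j mod N = l mod N \<and> subset_reg N j = subset_reg N l"
  hence "set_encode (subset_reg N j) = set_encode (subset_reg N l)" by simp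
  hence "j div N = l div N" unfolding subset_reg_def by simp
  thus "j = l" using a by (metis div_mult_mod_eq)
qed simp

lemma sum_walsh_mat_clock:
  assumes N: "N > 0" and j: "j < N * 2^N" and c: "c < N"
  shows "(\<Sum>k<N * 2^N. walsh_mat N $$ (j,k) * (if k mod N = c then h (k div N) else 0))
    = (if j mod N = c then walsh_norm N * (\<Sum>q<2^N. (-1)^card (subset_reg N j \<inter> set_decode q) * h q) else 0)"
proof -
  have "(\<Sum>k<N * 2^N. walsh_mat N $$ (j,k) * (if k mod N = c then h (k div N) else 0))
     = (\<Sum>q<2^N. \<Sum>c'<N. if c' = c then walsh_mat N $$ (j, q * N + c') * h q else 0)"
    unfolding sum_lessThan_mult[OF N] by (intro sum.cong refl) simp
  also have "\<dots> = (\<Sum>q<2^N. walsh_mat N $$ (j, q * N + c) * h q)"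
    using c by simp
  also have "\<dots> = (\<Sum>q<2^N. if j mod N = c then walsh_norm N * (-1)^card (subset_reg N j \<inter> set_decode q) * h q else 0)"
    using j c mult_add_less[of _ "2^N" c N] by (intro sum.cong refl) (simp add: walsh_mat_def subset_reg_mult_add)
  finally show ?thesis by (simp add: sum_distrib_left mult.assoc)
qed

lemma walsh_mat_carrier: "walsh_mat N \<in> carrier_mat (N * 2^N) (N * 2^N)"
  unfolding walsh_mat_def by simp

lemma cadj_walsh_mat: "cadj (walsh_mat N) = walsh_mat N"
  unfolding cadj_def walsh_mat_def by (rule eq_matI) (auto simp: walsh_norm_def Int_commute)

lemma unitary_walsh_mat:
  assumes N: "N > 0"
  shows "unitary_mat (N * 2^N) (walsh_mat N)"
proof -
  have "walsh_mat N * walsh_mat N = 1\<^sub>m (N * 2^N)"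
  proof (rule eq_matI)
    fix j l assume "j < dim_row (1\<^sub>m (N * 2^N))" "l < dim_col (1\<^sub>m (N * 2^N))"
    hence j: "j < N * 2^N" and l: "l < N * 2^N" by auto
    have "(walsh_mat N * walsh_mat N) $$ (j,l) = (\<Sum>k<N * 2^N. walsh_mat N $$ (j,k) * walsh_mat N $$ (k,l))"
      using j l unfolding walsh_mat_def by (simp add: scalar_prod_def atLeast0LessThan)
    also have "\<dots> = (\<Sum>k<N * 2^N. walsh_mat N $$ (j,k) * (if k mod N = l mod N
        then walsh_norm N * (-1)^card (set_decode (k div N) \<inter> subset_reg N l) else 0))"
      by (intro sum.cong refl) (use l in \<open>auto simp: walsh_mat_def subset_reg_def\<close>)
    also have "\<dots> = (if j mod N = l mod N then walsh_norm N * (\<Sum>q<2^N.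
        (-1)^card (subset_reg N j \<inter> set_decode q) * (walsh_norm N * (-1)^card (set_decode q \<inter> subset_reg N l))) else 0)"
      by (rule sum_walsh_mat_clock[OF N j]) (use N in simp)
    also have "\<dots> = (if j mod N = l mod N then walsh_norm N * walsh_norm N *
        (\<Sum>q<2^N. (-1)^card (subset_reg N j \<inter> set_decode q) * (-1)^card (set_decode q \<inter> subset_reg N l)) else 0)"
      by (simp add: sum_distrib_left algebra_simps)
    also have "\<dots> = (if j mod N = l mod N then walsh_norm N * walsh_norm N *
        (if subset_reg N j = subset_reg N l then 2^N else 0) else 0)"
      by (simp only: sum_set_decode_parity_product[OF subset_reg_subset[OF j] subset_reg_subset[OF l]])
    also have "\<dots> = (if j mod N = l mod N \<and> subset_reg N j = subset_reg N l then 1 else 0)"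
      using walsh_norm_sq[of N] by simp
    also have "\<dots> = 1\<^sub>m (N * 2^N) $$ (j,l)"
      using j l by (simp add: clock_subset_reg_eq_iff)
    finally show "(walsh_mat N * walsh_mat N) $$ (j,l) = 1\<^sub>m (N * 2^N) $$ (j,l)" .
  qed (auto simp: walsh_mat_def)
  thus ?thesis unfolding unitary_mat_def using walsh_mat_carrier cadj_walsh_mat by simp
qed

definition clock_succ :: "nat \<Rightarrow> nat \<Rightarrow> nat" where
  "clock_succ N k = k div N * N + (k mod N + 1) mod N"

definition clock_pred :: "nat \<Rightarrow> nat \<Rightarrow> nat" where
  "clock_pred N k = k div N * N + (k mod N + (N - 1)) mod N"

lemma mod_succ_then_pred: "c < N \<Longrightarrow> ((c + 1) mod N + (N - 1)) mod N = c"
  for c N :: nat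
  by (cases "Suc c = N") auto

lemma mod_pred_then_succ: "c < N \<Longrightarrow> ((c + (N - 1)) mod N + 1) mod N = c"
  for c N :: nat
  by (cases "c = 0") (auto simp: mod_if)

lemma clock_succ_pred:
  fixes N k :: nat assumes N: "N > 0" and k: "k < N * 2^N"
  shows "clock_succ N k < N * 2^N" "clock_pred N k < N * 2^N"
    "clock_pred N (clock_succ N k) = k" "clock_succ N (clock_pred N k) = k"
    "subset_reg N (clock_pred N k) = subset_reg N k"
    "clock_pred N k mod N = (k mod N + (N - 1)) mod N" "clock_succ N k mod N = (k mod N + 1) mod N"
proof -
  have q: "k div N < 2^N" using k by (simp add: less_mult_imp_div_less mult.commute)
  have c: "k mod N < N" "(k mod N + 1) mod N < N" "(k mod N + (N - 1)) mod N < N" using N by auto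
  show "clock_succ N k < N * 2^N" "clock_pred N k < N * 2^N"
    unfolding clock_succ_def clock_pred_def using mult_add_less[OF q] c by auto
  show "clock_pred N (clock_succ N k) = k"
    unfolding clock_pred_def clock_succ_def using c(2) mod_succ_then_pred[OF c(1)] by simp
  show "clock_succ N (clock_pred N k) = k"
    unfolding clock_pred_def clock_succ_def using c(3) mod_pred_then_succ[OF c(1)] by simp
  show "subset_reg N (clock_pred N k) = subset_reg N k"
    "clock_pred N k mod N = (k mod N + (N - 1)) mod N"
    unfolding clock_pred_def subset_reg_def using c(3) by simp_all
  show "clock_succ N k mod N = (k mod N + 1) mod N"
    unfolding clock_succ_def using c(2) by simp
qed

definition clock_shift :: "nat \<Rightarrow> complex mat" where
  "clock_shift N = perm_mat (N * 2^N) (clock_succ N)"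

lemma unitary_clock_shift: "N > 0 \<Longrightarrow> unitary_mat (N * 2^N) (clock_shift N)"
  unfolding clock_shift_def
  by (rule unitary_perm_mat, rule bij_betw_byWitness[where f' = "clock_pred N"]) (auto simp: clock_succ_pred)

lemma clock_shift_mult_vec_nth:
  assumes N: "N > 0" and v: "dim_vec v = N * 2^N" and j: "j < N * 2^N"
  shows "(clock_shift N *\<^sub>v v) $ j = v $ clock_pred N j"
proof -
  have "(clock_shift N *\<^sub>v v) $ j = (\<Sum>k<N * 2^N. (if j = clock_succ N k then 1 else 0) * v $ k)"
    using mult_mat_vec_nth_sum[of "clock_shift N" "N * 2^N" v j] v j
    unfolding clock_shift_def perm_mat_def by simp
  also have "\<dots> = (\<Sum>k<N * 2^N. if k = clock_pred N j then v $ k else 0)"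
    by (intro sum.cong refl) (use N j in \<open>auto simp: clock_succ_pred\<close>)
  finally show ?thesis using clock_succ_pred(2)[OF N j] by simp
qed

text \<open>The exact \<open>N\<close>-query algorithm (Bernstein--Vazirani with a clock): prepare the uniform
  superposition of all subsets \<open>Q\<close> at clock \<open>0\<close>; at clock \<open>t\<close> the query flips the sign of \<open>Q\<close>
  iff \<open>t \<in> Q\<close> and \<open>x\<^sub>t = 1\<close>, then the clock advances. After \<open>N\<close> queries \<open>Q\<close> carries the
  sign \<open>(-1)\<^bsup>|Q \<inter> x|\<^esup>\<close>, and a final Hadamard transform maps this state to \<open>x\<close> itself.\<close>
definition learn_labels :: "nat \<Rightarrow> (nat \<Rightarrow> 'i) \<Rightarrow> nat \<Rightarrow> 'i option" where
  "learn_labels N ev j = (if j mod N \<in> subset_reg N j then Some (ev (j mod N)) else None)"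

definition learn_mat :: "nat \<Rightarrow> nat \<Rightarrow> complex mat" where
  "learn_mat N t = (if t = 0 \<or> t = N then walsh_mat N else clock_shift N)"

definition learn_accept :: "nat \<Rightarrow> (nat \<Rightarrow> 'i) \<Rightarrow> ('i set \<Rightarrow> bool) \<Rightarrow> nat set" where
  "learn_accept N ev f = {j. j mod N = N - 1 \<and> f (ev ` subset_reg N j)}"

text \<open>The amplitudes at clock \<open>c\<close> after the first \<open>t\<close> variables have been queried.\<close>
definition learn_amp :: "nat \<Rightarrow> nat set \<Rightarrow> nat \<Rightarrow> nat \<Rightarrow> nat \<Rightarrow> complex" where
  "learn_amp N X c t j =
     (if j mod N = c then walsh_norm N * (-1)^card (subset_reg N j \<inter> X \<inter> {..<t}) else 0)"

lemma unitary_learn_mat: "N > 0 \<Longrightarrow> unitary_mat (N * 2^N) (learn_mat N t)"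
  unfolding learn_mat_def using unitary_walsh_mat unitary_clock_shift by auto

lemma dim_qstate_learn: "N > 0 \<Longrightarrow> dim_vec (qstate (N * 2^N) (learn_mat N) lab x t) = N * 2^N"
  by (rule dim_qstate[of t]) (use unitary_learn_mat in \<open>auto simp: unitary_mat_def\<close>)

lemma parity_card_lessThan_Suc:
  "(-1::complex)^card (A \<inter> {..<Suc t}) = (if t \<in> A then -1 else 1) * (-1)^card (A \<inter> {..<t})"
  using parity_card_Int_insert[of "{..<t}" t A] by (simp add: lessThan_Suc)

lemma oracle_mult_learn_amp:
  assumes t: "t < N" and X: "X = {i. i < N \<and> ev i \<in> x}" and dv: "dim_vec \<psi> = N * 2^N"
    and \<psi>: "\<forall>k<N * 2^N. \<psi> $ k = learn_amp N X t t k" and j: "j < N * 2^N"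
  shows "(oracle_mat (N * 2^N) (learn_labels N ev) x *\<^sub>v \<psi>) $ j = learn_amp N X t (Suc t) j"
proof -
  have "oracle_phase (learn_labels N ev) x j = (if t \<in> subset_reg N j \<inter> X then -1 else 1)"
    if "j mod N = t"
    using that t X by (auto simp: oracle_phase_def learn_labels_def)
  thus ?thesis
    using \<psi> j by (simp add: oracle_mat_mult_vec_nth[OF dv j] learn_amp_def parity_card_lessThan_Suc)
qed

lemma learn_amp_clock_pred:
  assumes N: "N > 0" and c: "Suc c < N" and j: "j < N * 2^N"
  shows "learn_amp N X c t (clock_pred N j) = learn_amp N X (Suc c) t j"
proof -
  have succ: "j mod N = (clock_pred N j mod N + 1) mod N"
    using clock_succ_pred(7)[OF N clock_succ_pred(2)[OF N j]] by (simp add: clock_succ_pred(4)[OF N j])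
  have "Suc c + (N - 1) = c + N" using c by simp
  hence "clock_pred N j mod N = c \<longleftrightarrow> j mod N = Suc c"
    using succ c clock_succ_pred(6)[OF N j] by (metis mod_add_self2 mod_less Suc_eq_plus1 Suc_lessD)
  thus ?thesis using clock_succ_pred(5)[OF N j] by (simp add: learn_amp_def)
qed

lemma qstate_learn:
  assumes N: "N > 0" and X: "X = {i. i < N \<and> ev i \<in> x}"
  shows "t < N \<Longrightarrow> j < N * 2^N \<Longrightarrow> qstate (N * 2^N) (learn_mat N) (learn_labels N ev) x t $ j = learn_amp N X t t j"
proof (induction t arbitrary: j)
  case 0
  have "qstate (N * 2^N) (learn_mat N) (learn_labels N ev) x 0 $ j
      = (\<Sum>k<N * 2^N. walsh_mat N $$ (j,k) * unit_vec (N * 2^N) 0 $ k)"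
    using 0 by (simp add: learn_mat_def mult_mat_vec_nth_sum[OF walsh_mat_carrier])
  also have "\<dots> = (\<Sum>k<N * 2^N. if k = 0 then walsh_mat N $$ (j,0) else 0)"
    by (intro sum.cong refl) (use N in auto)
  finally show ?case using 0 N by (simp add: walsh_mat_def learn_amp_def subset_reg_def)
next
  case (Suc t)
  let ?\<psi> = "oracle_mat (N * 2^N) (learn_labels N ev) x *\<^sub>v qstate (N * 2^N) (learn_mat N) (learn_labels N ev) x t"
  have "qstate (N * 2^N) (learn_mat N) (learn_labels N ev) x (Suc t) $ j = ?\<psi> $ clock_pred N j"
    using Suc.prems N by (simp add: learn_mat_def clock_shift_mult_vec_nth oracle_mat_def)
  also have "\<dots> = learn_amp N X t (Suc t) (clock_pred N j)"
    using Suc clock_succ_pred(2)[OF N Suc.prems(2)]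
    by (intro oracle_mult_learn_amp[OF _ X dim_qstate_learn[OF N]]) auto
  also have "\<dots> = learn_amp N X (Suc t) (Suc t) j"
    by (rule learn_amp_clock_pred[OF N Suc.prems])
  finally show ?case .
qed

lemma qstate_learn_final:
  assumes N: "N > 0" and X: "X = {i. i < N \<and> ev i \<in> x}" and j: "j < N * 2^N"
  shows "qstate (N * 2^N) (learn_mat N) (learn_labels N ev) x N $ j
    = (if j mod N = N - 1 \<and> subset_reg N j = X then 1 else 0)"
proof -
  define t where "t = N - 1"
  have Nt: "N = Suc t" and t: "t < N" using N unfolding t_def by auto
  have XN: "X \<subseteq> {..<N}" using X by auto
  define v where "v = oracle_mat (N * 2^N) (learn_labels N ev) x *\<^sub>v qstate (N * 2^N) (learn_mat N) (learn_labels N ev) x t"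
  have dv: "dim_vec v = N * 2^N" unfolding v_def by (simp add: oracle_mat_def)
  define h where "h q = walsh_norm N * (-1)^card (set_decode q \<inter> X)" for q
  have v: "v $ k = (if k mod N = t then h (k div N) else 0)" if "k < N * 2^N" for k
  proof -
    have "v $ k = learn_amp N X t (Suc t) k"
      unfolding v_def using that qstate_learn[OF N X t]
      by (intro oracle_mult_learn_amp[OF t X dim_qstate_learn[OF N]]) auto
    moreover have "subset_reg N k \<inter> X \<inter> {..<N} = set_decode (k div N) \<inter> X"
      using XN unfolding subset_reg_def by auto
    ultimately show ?thesis using Nt by (simp add: learn_amp_def h_def)
  qed
  have "qstate (N * 2^N) (learn_mat N) (learn_labels N ev) x (Suc t) = walsh_mat N *\<^sub>v v"
    unfolding v_def using Nt by (simp add: learn_mat_def)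
  hence "qstate (N * 2^N) (learn_mat N) (learn_labels N ev) x N $ j = (walsh_mat N *\<^sub>v v) $ j"
    using Nt by simp
  also have "\<dots> = (\<Sum>k<N * 2^N. walsh_mat N $$ (j,k) * (if k mod N = t then h (k div N) else 0))"
    by (simp add: mult_mat_vec_nth_sum[OF walsh_mat_carrier dv j] v)
  also have "\<dots> = (if j mod N = t then walsh_norm N * walsh_norm N *
      (\<Sum>q<2^N. (-1)^card (subset_reg N j \<inter> set_decode q) * (-1)^card (set_decode q \<inter> X)) else 0)"
    unfolding sum_walsh_mat_clock[OF N j t, of h] by (simp add: h_def sum_distrib_left algebra_simps)
  also have "\<dots> = (if j mod N = t then walsh_norm N * walsh_norm N * (if subset_reg N j = X then 2^N else 0) else 0)"
    by (simp only: sum_set_decode_parity_product[OF subset_reg_subset[OF j] XN])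
  also have "\<dots> = (if j mod N = N - 1 \<and> subset_reg N j = X then 1 else 0)"
    using walsh_norm_sq[of N] unfolding t_def by simp
  finally show ?thesis .
qed

lemma accept_prob_learn:
  assumes N: "N > 0" and ev: "bij_betw ev {0..<N} I" and x: "x \<subseteq> I"
  shows "accept_prob (N * 2^N) (learn_mat N) (learn_labels N ev) (learn_accept N ev f) N x
    = (if f x then 1 else 0)"
proof -
  define X where "X = {i. i < N \<and> ev i \<in> x}"
  have XN: "X \<subseteq> {..<N}" unfolding X_def by auto
  have evX: "ev ` X = x"
    using x ev unfolding X_def bij_betw_def by auto
  define j0 where "j0 = set_encode X * N + (N - 1)"
  have j0: "j0 < N * 2^N"
    unfolding j0_def using set_encode_less_power[OF XN] N by (intro mult_add_less) auto
  have j0_iff: "j mod N = N - 1 \<and> subset_reg N j = X \<longleftrightarrow> j = j0" for j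
  proof -
    have "j0 mod N = N - 1"
      unfolding j0_def using N by (subst mod_mult_self3) simp
    moreover have "subset_reg N j0 = X"
      unfolding j0_def using N finite_subset[OF XN] by (subst subset_reg_mult_add) auto
    ultimately show ?thesis using clock_subset_reg_eq_iff[of j N j0] by auto
  qed
  have "accept_prob (N * 2^N) (learn_mat N) (learn_labels N ev) (learn_accept N ev f) N x
      = (\<Sum>j<N * 2^N. if j \<in> learn_accept N ev f
           then (cmod (qstate (N * 2^N) (learn_mat N) (learn_labels N ev) x N $ j))\<^sup>2 else 0)"
    unfolding accept_prob_def Int_commute[of "learn_accept N ev f"] by (rule sum.inter_restrict) simp
  also have "\<dots> = (\<Sum>j<N * 2^N. if j = j0 then (if f x then 1 else 0) else 0)"
  proof (intro sum.cong refl)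
    fix j assume "j \<in> {..<N * 2^N}"
    hence "qstate (N * 2^N) (learn_mat N) (learn_labels N ev) x N $ j = (if j = j0 then 1 else 0)"
      by (simp only: qstate_learn_final[OF N X_def] j0_iff lessThan_iff)
    moreover have "j0 \<in> learn_accept N ev f \<longleftrightarrow> f x"
      using j0_iff[of j0] evX unfolding learn_accept_def by simp
    ultimately show "(if j \<in> learn_accept N ev f
        then (cmod (qstate (N * 2^N) (learn_mat N) (learn_labels N ev) x N $ j))\<^sup>2 else 0)
      = (if j = j0 then (if f x then 1 else 0) else 0)"
      by auto
  qed
  also have "\<dots> = (if f x then 1 else 0)" using j0 by simp
  finally show ?thesis .
qed

lemma ex_computes_bounded_error:
  assumes "finite I" "I \<noteq> {}"
  shows "\<exists>T d U lab acc. computes_bounded_error I f T d U lab acc"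
proof -
  define N where "N = card I"
  have N: "N > 0" using assms unfolding N_def by (simp add: card_gt_0_iff)
  obtain ev where ev: "bij_betw ev {0..<N} I"
    using ex_bij_betw_nat_finite[OF assms(1)] unfolding N_def by blast
  have "learn_labels N ev j = Some i \<Longrightarrow> i \<in> I" for i j
    using ev N unfolding learn_labels_def bij_betw_def by (auto split: if_splits)
  hence "computes_bounded_error I f N (N * 2^N) (learn_mat N) (learn_labels N ev) (learn_accept N ev f)"
    unfolding computes_bounded_error_def using N unitary_learn_mat accept_prob_learn[OF N ev] by auto
  thus ?thesis by blast
qed

lemma Q_attained:
  assumes "finite I" "I \<noteq> {}"
  obtains d U lab acc where "computes_bounded_error I f (Q I f) d U lab acc"
proof -
  have "\<exists>d U lab acc. computes_bounded_error I f (Q I f) d U lab acc"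
    unfolding Q_def by (rule LeastI_ex) (rule ex_computes_bounded_error[OF assms])
  thus ?thesis using that by blast
qed

theorem theorem5:
  shows "\<exists>c::real. c > 0 \<and>
    (\<forall>n::nat. \<forall>EH. n \<ge> 2 \<longrightarrow> EH \<subseteq> all_edges n \<longrightarrow> EH \<noteq> {} \<longrightarrow>
       real (Q (all_edges n) (f_hom n EH)) \<ge> c * real n)"
proof (intro exI[of _ "1/40"] conjI allI impI)
  fix n :: nat and EH
  assume n: "n \<ge> 2" and EH: "EH \<subseteq> all_edges n" and ne: "EH \<noteq> {}"
  let ?I = "all_edges n" and ?f = "f_hom n EH"
  have "finite ?I"
    by (rule finite_subset[of _ "Pow {..<n}"]) (auto simp: all_edges_def)
  moreover have "{0,1} \<in> ?I" using n unfolding all_edges_def by force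
  ultimately obtain d U lab acc where cb: "computes_bounded_error ?I ?f (Q ?I ?f) d U lab acc"
    using Q_attained by blast
  obtain s where "n * n \<le> 16 * s" and "sensitivity_at_least ?I ?f s"
    by (rule sensitivity_f_hom[OF n EH ne])
  then obtain x S where "x \<subseteq> ?I" "finite S" "\<forall>e\<in>S. sensitive_at ?I ?f x e"
    and nS: "n * n \<le> 16 * card S"
    unfolding sensitivity_at_least_def by force
  hence "real (card S) \<le> 100 * (real (Q ?I ?f))\<^sup>2"
    using card_sensitive_le[OF cb] by blast
  moreover have "real n * real n \<le> 16 * real (card S)"
    using nS by (metis of_nat_le_iff of_nat_mult of_nat_numeral)
  ultimately have "(real n)\<^sup>2 \<le> (40 * real (Q ?I ?f))\<^sup>2"
    by (simp add: power2_eq_square)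
  hence "real n \<le> 40 * real (Q ?I ?f)" by (rule power2_le_imp_le) simp
  thus "1/40 * real n \<le> real (Q ?I ?f)" by simp
qed simp

end
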